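(* Let $\mathcal{S}\subseteq\mathcal{L}$ and $\phi\in\mathcal{L}$, let $\mathcal{AF}_{\vdash}=(\vdash,\overline{\cdot},\mathsf{id})$ be contrapositable with $\vdash$ satisfying Cut, and suppose that for every maximal $\mathcal{AF}_{\vdash}(\mathcal{S})$-consistent set $\Theta$ there is $\Theta'\subseteq\Theta$ with $\Theta'\vdash\phi$. Then the maximal $\mathcal{AF}_{\vdash}(\mathcal{S})$-consistent subsets of $\mathcal{S}$ are exactly the maximal $\mathcal{AF}_{\vdash^{+\phi}}(\mathcal{S})$-consistent subsets of $\mathcal{S}$.
   Context: $\mathcal{L}$ is a set of formulas; ${\vdash}\subseteq\wp_{\sf fin}(\mathcal{L})\times\mathcal{L}$ is arbitrary and $\overline{\cdot}:\mathcal{L}\to\wp(\mathcal{L})$. $\vdash^{+\phi}$ is the transitive closure of ${\vdash}\cup\{(\emptyset,\phi)\}$. Cut: for every $\phi$ and finite $\Gamma,\Delta$, if $\Gamma\vdash\phi$ and $\Delta\vdash^{+\phi}\gamma$ then $\Gamma\cup\Delta\vdash\gamma$. Contrapositable: for all finite $\Theta$, if $\Theta\vdash\gamma'$ with $\gamma'\in\overline{\gamma}$, then for every $\sigma\in\Theta$, $(\Theta\cup\{\gamma\})\setminus\{\sigma\}\vdash\sigma'$ for some $\sigma'\in\overline{\sigma}$. For a relation $\vdash'$ (here $\vdash$ or $\vdash^{+\phi}$), $\Theta\subseteq\mathcal{S}$ is $\mathcal{AF}_{\vdash'}(\mathcal{S})$-inconsistent iff there are $\Theta'\subseteq\Theta$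 and $\gamma\in\Theta'$ with $\Theta'\setminus\{\gamma\}\vdash'\gamma'$ for some $\gamma'\in\overline{\gamma}$, consistent otherwise; maximal consistent = consistent with no consistent proper superset within $\mathcal{S}$. *)

theory Defs
  imports Main
begin

text \<open>A derivability relation
  der :: 'a set => 'a => bool relates (finite) sets of premises to conclusions;
  ctr :: 'a => 'a set is the contrariness operator.\<close>

inductive derp :: "('a set \<Rightarrow> 'a \<Rightarrow> bool) \<Rightarrow> 'a \<Rightarrow> 'a set \<Rightarrow> 'a \<Rightarrow> bool"
  for der :: "'a set \<Rightarrow> 'a \<Rightarrow> bool" and \<phi> :: 'a where
  base: "der \<Gamma> \<gamma> \<Longrightarrow> derp der \<phi> \<Gamma> \<gamma>"
| ax: "derp der \<phi> {} \<phi>"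
| trans: "derp der \<phi> \<Gamma> \<psi> \<Longrightarrow> derp der \<phi> \<Delta> \<gamma> \<Longrightarrow> \<psi> \<in> \<Delta>
          \<Longrightarrow> derp der \<phi> (\<Gamma> \<union> (\<Delta> - {\<psi>})) \<gamma>"

definition fin_rel :: "('a set \<Rightarrow> 'a \<Rightarrow> bool) \<Rightarrow> bool" where
  "fin_rel der \<longleftrightarrow> (\<forall>\<Gamma> \<gamma>. der \<Gamma> \<gamma> \<longrightarrow> finite \<Gamma>)"

definition cut_prop :: "('a set \<Rightarrow> 'a \<Rightarrow> bool) \<Rightarrow> bool" where
  "cut_prop der \<longleftrightarrow> (\<forall>\<phi> \<Gamma> \<Delta> \<gamma>. finite \<Gamma> \<longrightarrow> finite \<Delta> \<longrightarrow>
      der \<Gamma> \<phi> \<longrightarrow> derp der \<phi> \<Delta> \<gamma> \<longrightarrow> der (\<Gamma> \<union> \<Delta>) \<gamma>)"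

definition contrapositable :: "('a set \<Rightarrow> 'a \<Rightarrow> bool) \<Rightarrow> ('a \<Rightarrow> 'a set) \<Rightarrow> bool" where
  "contrapositable der ctr \<longleftrightarrow> (\<forall>\<Theta> \<gamma> \<gamma>'. finite \<Theta> \<longrightarrow> der \<Theta> \<gamma>' \<longrightarrow> \<gamma>' \<in> ctr \<gamma> \<longrightarrow>
      (\<forall>\<sigma>\<in>\<Theta>. \<exists>\<sigma>'\<in>ctr \<sigma>. der ((\<Theta> \<union> {\<gamma>}) - {\<sigma>}) \<sigma>'))"

definition inconsistent :: "('a set \<Rightarrow> 'a \<Rightarrow> bool) \<Rightarrow> ('a \<Rightarrow> 'a set) \<Rightarrow> 'a set \<Rightarrow> bool" where
  "inconsistent R ctr \<Theta> \<longleftrightarrow>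
     (\<exists>\<Theta>'\<subseteq>\<Theta>. \<exists>\<gamma>\<in>\<Theta>'. \<exists>\<gamma>'\<in>ctr \<gamma>. R (\<Theta>' - {\<gamma>}) \<gamma>')"

definition consistent :: "('a set \<Rightarrow> 'a \<Rightarrow> bool) \<Rightarrow> ('a \<Rightarrow> 'a set) \<Rightarrow> 'a set \<Rightarrow> 'a set \<Rightarrow> bool" where
  "consistent R ctr S \<Theta> \<longleftrightarrow> \<Theta> \<subseteq> S \<and> \<not> inconsistent R ctr \<Theta>"

definition max_consistent :: "('a set \<Rightarrow> 'a \<Rightarrow> bool) \<Rightarrow> ('a \<Rightarrow> 'a set) \<Rightarrow> 'a set \<Rightarrow> 'a set \<Rightarrow> bool" where
  "max_consistent R ctr S \<Theta> \<longleftrightarrow> consistent R ctr S \<Theta> \<and>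
     (\<forall>\<Theta>'. \<Theta> \<subset> \<Theta>' \<longrightarrow> \<not> consistent R ctr S \<Theta>')"

end

theory Submission
  imports Defs
begin

text \<open>Adding \<open>\<phi>\<close> as an axiom can only create new inconsistencies, so every set that is
  consistent for \<open>derp der \<phi>\<close> is consistent for \<open>der\<close>. Conversely, if a consistent set \<open>\<Theta>\<close>
  already derives \<open>\<phi>\<close> from some \<open>\<Theta>\<^sub>0 \<subseteq> \<Theta>\<close>, a \<open>derp\<close>-inconsistency \<open>\<Theta>' - {\<gamma>} \<turnstile>\<^sup>+\<^sup>\<phi> \<gamma>'\<close>
  inside \<open>\<Theta>\<close> becomes \<open>\<Theta>\<^sub>0 \<union> (\<Theta>' - {\<gamma>}) \<turnstile> \<gamma>'\<close> by Cut, and contraposition removes \<open>\<gamma>\<close>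
  from its premises, giving a \<open>der\<close>-inconsistency inside \<open>\<Theta>\<close>. Hence all maximal
  \<open>der\<close>-consistent sets are \<open>derp\<close>-consistent; together with Lindenbaum's lemma for \<open>der\<close>
  (derivations have finite premises, so Zorn's lemma applies) this identifies the
  maximal consistent sets of both relations.\<close>

lemma fin_relD: "fin_rel der \<Longrightarrow> der \<Gamma> \<gamma> \<Longrightarrow> finite \<Gamma>"
  unfolding fin_rel_def by blast

lemma inconsistentI:
  "\<Theta>' \<subseteq> \<Theta> \<Longrightarrow> \<gamma> \<in> \<Theta>' \<Longrightarrow> \<gamma>' \<in> ctr \<gamma> \<Longrightarrow> R (\<Theta>' - {\<gamma>}) \<gamma>' \<Longrightarrow> inconsistent R ctr \<Theta>"
  unfolding inconsistent_def by blast

lemma inconsistentE: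
  assumes "inconsistent R ctr \<Theta>"
  obtains \<Theta>' \<gamma> \<gamma>' where "\<Theta>' \<subseteq> \<Theta>" "\<gamma> \<in> \<Theta>'" "\<gamma>' \<in> ctr \<gamma>" "R (\<Theta>' - {\<gamma>}) \<gamma>'"
  using assms unfolding inconsistent_def by blast

lemma inconsistent_mono:
  assumes "inconsistent R ctr \<Theta>" "\<Theta> \<subseteq> \<Theta>\<^sub>2" "\<And>\<Gamma> \<gamma>. R \<Gamma> \<gamma> \<Longrightarrow> R\<^sub>2 \<Gamma> \<gamma>"
  shows "inconsistent R\<^sub>2 ctr \<Theta>\<^sub>2"
  using assms(1)
proof (rule inconsistentE)
  fix \<Theta>' \<gamma> \<gamma>'
  assume "\<Theta>' \<subseteq> \<Theta>" "\<gamma> \<in> \<Theta>'" "\<gamma>' \<in> ctr \<gamma>" "R (\<Theta>' - {\<gamma>}) \<gamma>'"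
  with assms(2,3) show ?thesis
    by (meson inconsistentI order_trans)
qed

lemma inconsistent_finite_subset:
  assumes "fin_rel der" "inconsistent der ctr \<Theta>"
  shows "\<exists>\<Theta>'\<subseteq>\<Theta>. finite \<Theta>' \<and> inconsistent der ctr \<Theta>'"
  using assms(2)
proof (rule inconsistentE)
  fix \<Theta>' \<gamma> \<gamma>'
  assume "\<Theta>' \<subseteq> \<Theta>" "\<gamma> \<in> \<Theta>'" "\<gamma>' \<in> ctr \<gamma>" and derives: "der (\<Theta>' - {\<gamma>}) \<gamma>'"
  moreover have "finite (\<Theta>' - {\<gamma>})"
    using assms(1) derives by (rule fin_relD)
  then have "finite \<Theta>'" by simp
  ultimately show ?thesis
    by (meson inconsistentI order_refl)
qed

lemma consistent_derp_imp_consistent: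
  "consistent (derp der \<phi>) ctr S \<Theta> \<Longrightarrow> consistent der ctr S \<Theta>"
  unfolding consistent_def by (blast intro: inconsistent_mono derp.base)

lemma derp_finite:
  "derp der \<phi> \<Gamma> \<gamma> \<Longrightarrow> fin_rel der \<Longrightarrow> finite \<Gamma>"
  by (induction rule: derp.induct) (auto dest: fin_relD)

text \<open>Contrapositability instantiated with \<open>\<sigma> = \<gamma>\<close>.\<close>

lemma contrapositable_remove_premise:
  assumes "contrapositable der ctr" "finite \<Delta>" "der \<Delta> \<gamma>'" "\<gamma>' \<in> ctr \<gamma>"
  shows "\<exists>\<gamma>''\<in>ctr \<gamma>. der (\<Delta> - {\<gamma>}) \<gamma>''"
proof (cases "\<gamma> \<in> \<Delta>")
  case True
  with assms have "\<exists>\<gamma>''\<in>ctr \<gamma>. der ((\<Delta> \<union> {\<gamma>}) - {\<gamma>}) \<gamma>''"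
    unfolding contrapositable_def by blast
  moreover have "(\<Delta> \<union> {\<gamma>}) - {\<gamma>} = \<Delta> - {\<gamma>}" by blast
  ultimately show ?thesis by simp
next
  case False
  then show ?thesis using assms(3,4) by auto
qed

lemma consistent_imp_consistent_derp:
  assumes fin: "fin_rel der" and contra: "contrapositable der ctr" and cut: "cut_prop der"
    and cons: "consistent der ctr S \<Theta>"
    and "\<Theta>\<^sub>0 \<subseteq> \<Theta>" and derives_\<phi>: "der \<Theta>\<^sub>0 \<phi>"
  shows "consistent (derp der \<phi>) ctr S \<Theta>"
  unfolding consistent_def
proof (intro conjI notI)
  show "\<Theta> \<subseteq> S" using cons by (simp add: consistent_def)
next
  assume "inconsistent (derp der \<phi>) ctr \<Theta>"
  then obtain \<Theta>' \<gamma> \<gamma>' where "\<Theta>' \<subseteq> \<Theta>" "\<gamma> \<in> \<Theta>'" and \<gamma>': "\<gamma>' \<in> ctr \<gamma>"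
    and derp_\<gamma>': "derp der \<phi> (\<Theta>' - {\<gamma>}) \<gamma>'"
    by (rule inconsistentE)
  define \<Delta> where "\<Delta> = \<Theta>\<^sub>0 \<union> (\<Theta>' - {\<gamma>})"
  have "finite \<Theta>\<^sub>0" using fin derives_\<phi> by (rule fin_relD)
  moreover have "finite (\<Theta>' - {\<gamma>})" using derp_finite[OF derp_\<gamma>' fin] .
  ultimately have "finite \<Delta>" and "der \<Delta> \<gamma>'"
    using cut derives_\<phi> derp_\<gamma>' by (auto simp: \<Delta>_def cut_prop_def)
  then obtain \<gamma>'' where "\<gamma>'' \<in> ctr \<gamma>" "der (\<Delta> - {\<gamma>}) \<gamma>''"
    using contrapositable_remove_premise[OF contra _ _ \<gamma>'] by blast
  moreover have "(\<Delta> \<union> {\<gamma>}) - {\<gamma>} = \<Delta> - {\<gamma>}" by blast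
  moreover have "\<Delta> \<union> {\<gamma>} \<subseteq> \<Theta>"
    using \<open>\<Theta>\<^sub>0 \<subseteq> \<Theta>\<close> \<open>\<Theta>' \<subseteq> \<Theta>\<close> \<open>\<gamma> \<in> \<Theta>'\<close> by (auto simp: \<Delta>_def)
  ultimately have "inconsistent der ctr \<Theta>"
    using inconsistentI[of "\<Delta> \<union> {\<gamma>}" \<Theta> \<gamma>] by simp
  then show False using cons by (simp add: consistent_def)
qed

lemma consistent_Union_chain:
  assumes fin: "fin_rel der" and "C \<noteq> {}" and chain: "subset.chain A C"
    and cons: "\<And>X. X \<in> C \<Longrightarrow> consistent der ctr S X"
  shows "consistent der ctr S (\<Union>C)"
  unfolding consistent_def
proof (intro conjI notI)
  show "\<Union>C \<subseteq> S" using cons by (auto simp: consistent_def)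
next
  assume "inconsistent der ctr (\<Union>C)"
  then obtain \<Theta>' where "\<Theta>' \<subseteq> \<Union>C" "finite \<Theta>'" "inconsistent der ctr \<Theta>'"
    using inconsistent_finite_subset[OF fin] by blast
  moreover obtain B where "B \<in> C" "\<Theta>' \<subseteq> B"
    using finite_subset_Union_chain[OF \<open>finite \<Theta>'\<close> \<open>\<Theta>' \<subseteq> \<Union>C\<close> \<open>C \<noteq> {}\<close> chain] .
  ultimately have "inconsistent der ctr B"
    using inconsistent_mono by blast
  with \<open>B \<in> C\<close> show False
    using cons by (simp add: consistent_def)
qed

lemma consistent_extends_to_max_consistent:
  assumes fin: "fin_rel der" and "consistent der ctr S \<Theta>"
  obtains M where "\<Theta> \<subseteq> M" "max_consistent der ctr S M"
proof -
  define A where "A = {X. \<Theta> \<subseteq> X \<and> consistent der ctr S X}"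
  have "\<exists>M\<in>A. \<forall>X\<in>A. M \<subseteq> X \<longrightarrow> X = M"
  proof (rule subset_Zorn_nonempty)
    show "A \<noteq> {}" using assms(2) by (auto simp: A_def)
  next
    fix C assume "C \<noteq> {}" and chain: "subset.chain A C"
    then have "C \<subseteq> A" by (simp add: subset_chain_def)
    with \<open>C \<noteq> {}\<close> show "\<Union>C \<in> A"
      using consistent_Union_chain[OF fin \<open>C \<noteq> {}\<close> chain] by (auto simp: A_def)
  qed
  then obtain M where "M \<in> A" "\<forall>X\<in>A. M \<subseteq> X \<longrightarrow> X = M" by blast
  then have "max_consistent der ctr S M"
    unfolding max_consistent_def A_def by blast
  with \<open>M \<in> A\<close> show ?thesis using that by (auto simp: A_def)
qed

lemma max_consistent_iff_of_weaker:
  assumes weaker: "\<And>X. consistent R' ctr S X \<Longrightarrow> consistent R ctr S X"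
    and max_consistent_cons: "\<And>X. max_consistent R ctr S X \<Longrightarrow> consistent R' ctr S X"
    and extends: "\<And>X. consistent R ctr S X \<Longrightarrow> \<exists>M. X \<subseteq> M \<and> max_consistent R ctr S M"
  shows "max_consistent R ctr S \<Theta> \<longleftrightarrow> max_consistent R' ctr S \<Theta>"
proof
  assume max: "max_consistent R ctr S \<Theta>"
  then have "\<not> consistent R' ctr S X" if "\<Theta> \<subset> X" for X
    using that weaker unfolding max_consistent_def by blast
  with max max_consistent_cons show "max_consistent R' ctr S \<Theta>"
    by (simp add: max_consistent_def)
next
  assume max': "max_consistent R' ctr S \<Theta>"
  have "\<not> consistent R ctr S X" if "\<Theta> \<subset> X" for X
  proof
    assume "consistent R ctr S X"
    then obtain M where "X \<subseteq> M" "max_consistent R ctr S M" using extends by blast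
    then have "consistent R' ctr S M" and "\<Theta> \<subset> M"
      using max_consistent_cons that by blast+
    with max' show False unfolding max_consistent_def by blast
  qed
  with max' weaker show "max_consistent R ctr S \<Theta>"
    by (simp add: max_consistent_def)
qed

theorem lemma11:
  fixes der :: "'a set \<Rightarrow> 'a \<Rightarrow> bool" and ctr :: "'a \<Rightarrow> 'a set"
    and S :: "'a set" and \<phi> :: 'a
  assumes "fin_rel der"
    and "contrapositable der ctr"
    and "cut_prop der"
    and "\<forall>\<Theta>. max_consistent der ctr S \<Theta> \<longrightarrow> (\<exists>\<Theta>'\<subseteq>\<Theta>. der \<Theta>' \<phi>)"
  shows "{\<Theta>. max_consistent der ctr S \<Theta>} = {\<Theta>. max_consistent (derp der \<phi>) ctr S \<Theta>}"
proof -
  have "max_consistent der ctr S \<Theta> \<longleftrightarrow> max_consistent (derp der \<phi>) ctr S \<Theta>" for \<Theta>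
  proof (rule max_consistent_iff_of_weaker)
    show "consistent der ctr S X" if "consistent (derp der \<phi>) ctr S X" for X
      using that by (rule consistent_derp_imp_consistent)
    show "consistent (derp der \<phi>) ctr S X" if max: "max_consistent der ctr S X" for X
    proof -
      obtain \<Theta>\<^sub>0 where \<Theta>\<^sub>0: "\<Theta>\<^sub>0 \<subseteq> X" "der \<Theta>\<^sub>0 \<phi>" using assms(4) max by blast
      have "consistent der ctr S X" using max by (simp add: max_consistent_def)
      from consistent_imp_consistent_derp[OF assms(1-3) this \<Theta>\<^sub>0] show ?thesis .
    qed
    show "\<exists>M. X \<subseteq> M \<and> max_consistent der ctr S M" if "consistent der ctr S X" for X
      using consistent_extends_to_max_consistent[OF assms(1) that] by blast
  qed
  then show ?thesis by (simp add: set_eq_iff)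
qed

end
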